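(* Let $a\ne b$ be letters and let $w=a^{n_1}b^{n_2}a$ or $w=ab^{n_2}a^{n_1}$, where $n_1\ge1$ and $n_2\in\{3,4\}$. Then every element of $\mathtt{BR}(w)$ is rich.
   Context: For a word $w=w_1\cdots w_n$, $w^R=w_n\cdots w_1$; $w$ is a palindrome if $w=w^R$; a factor of $w$ is a word $u$ with $w=puq$. A word $w$ is rich if the number of distinct nonempty palindromic factors of $w$ equals $|w|$. The block reversal of a nonempty word $w$ is $\mathtt{BR}(w)=\{B_t\cdots B_1 : w=B_1\cdots B_t,\ t\ge1,\ \text{each } B_i \text{ nonempty}\}$. *)

theory Defs
  imports Main
begin

definition is_factor :: "'a list \<Rightarrow> 'a list \<Rightarrow> bool" where
  "is_factor u w \<longleftrightarrow> (\<exists>p q. w = p @ u @ q)"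

definition palindrome :: "'a list \<Rightarrow> bool" where
  "palindrome w \<longleftrightarrow> w = rev w"

definition pal_factors :: "'a list \<Rightarrow> 'a list set" where
  "pal_factors w = {u. u \<noteq> [] \<and> palindrome u \<and> is_factor u w}"

definition rich :: "'a list \<Rightarrow> bool" where
  "rich w \<longleftrightarrow> card (pal_factors w) = length w"

definition BR :: "'a list \<Rightarrow> 'a list set" where
  "BR w = {concat (rev Bs) | Bs. Bs \<noteq> [] \<and> (\<forall>B\<in>set Bs. B \<noteq> []) \<and> concat Bs = w}"

end

theory Submission
  imports Defs "HOL-Library.Sublist"
begin

(*
  Cutting a^n b^m a into blocks and reversing their order yields a word
  b^x1 a^x2 b^x3 a^x4 b^x5 a^x6 with x2 <= 1 and x1 + x3 + x5 = m; the word a b^m a^n is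
  handled by symmetry, as richness is invariant under reversal.

  Appending a letter creates at most one new palindromic factor (the longest palindromic
  suffix), so a word is rich iff each prefix ends in a palindrome occurring nowhere
  before. The words above are built run by run. While a run c^t grows after a block D
  that follows a run c^r, the new palindrome is the mirror c^t D c^t as long as t <= r,
  and the run c^t itself afterwards; that these do not occur earlier is decided on
  run-length encodings. The bound m <= 4 is used only when x4 >= 2, where it forces
  x3 >= min x1 x5.
*)

section \<open>Palindromic suffixes\<close>

lemma is_factor_iff_sublist: "is_factor u w \<longleftrightarrow> sublist u w"
  unfolding is_factor_def sublist_def by auto

lemma pal_factors_conv: "pal_factors w = {u. u \<noteq> [] \<and> palindrome u \<and> sublist u w}"
  by (simp add: pal_factors_def is_factor_iff_sublist)

lemma finite_pal_factors: "finite (pal_factors w)"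
  by (rule finite_subset[of _ "set (sublists w)"]) (auto simp: pal_factors_conv)

lemma pal_factors_snoc:
  "pal_factors (u @ [x]) = pal_factors u \<union> {s. s \<noteq> [] \<and> palindrome s \<and> suffix s (u @ [x])}"
  by (auto simp: pal_factors_conv sublist_snoc)

text \<open>The shorter palindrome is also a prefix of the longer one, hence ends before the
  last letter.\<close>
lemma sublist_if_shorter_pal_suffix:
  assumes "palindrome s" "palindrome p" "suffix s (u @ [x])" "suffix p (u @ [x])"
    and "length s < length p"
  shows "sublist s u"
proof -
  have "suffix s p"
    using suffix_length_suffix[OF assms(3,4)] assms(5) by simp
  then have "prefix (rev s) (rev p)"
    by (simp add: suffix_to_prefix)
  moreover have "rev s = s" "rev p = p"
    using assms(1,2) by (simp_all add: palindrome_def)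
  ultimately have "prefix s p"
    by simp
  then obtain z where p: "p = s @ z" and "z \<noteq> []"
    using assms(5) by (auto simp: prefix_def)
  then obtain z' y where "z = z' @ [y]"
    by (cases z rule: rev_cases) auto
  moreover obtain q where "u @ [x] = q @ p"
    using assms(4) by (auto simp: suffix_def)
  ultimately have "u = q @ s @ z'"
    using p by simp
  then show ?thesis by auto
qed

lemma card_pal_factors_snoc_le: "card (pal_factors (u @ [x])) \<le> Suc (card (pal_factors u))"
proof -
  let ?N = "pal_factors (u @ [x]) - pal_factors u"
  have "s = p" if "s \<in> ?N" "p \<in> ?N" for s p
  proof -
    have new: "palindrome s" "suffix s (u @ [x])" "\<not> sublist s u"
      "palindrome p" "suffix p (u @ [x])" "\<not> sublist p u"
      using that unfolding pal_factors_snoc by (auto simp: pal_factors_conv)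
    have "length s = length p"
    proof (rule ccontr)
      assume "length s \<noteq> length p"
      then show False
        using new sublist_if_shorter_pal_suffix[of s p u x] sublist_if_shorter_pal_suffix[of p s u x]
        by linarith
    qed
    then show "s = p"
      using new(2,5) suffix_length_suffix suffix_order.antisym by (metis order_refl)
  qed
  then have "card ?N \<le> 1"
    by (simp add: card_le_Suc0_iff_eq finite_pal_factors)
  moreover have "pal_factors (u @ [x]) = pal_factors u \<union> ?N"
    by (auto simp: pal_factors_snoc)
  ultimately show ?thesis
    using card_Un_le[of "pal_factors u" ?N] by simp
qed

lemma card_pal_factors_le_length: "card (pal_factors w) \<le> length w"
proof (induction w rule: rev_induct)
  case Nil
  then show ?case by (simp add: pal_factors_conv)
next
  case (snoc x w)
  then show ?case
    using card_pal_factors_snoc_le[of w x] by simp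
qed

lemma rich_rev_iff [simp]: "rich (rev w) \<longleftrightarrow> rich w"
proof -
  have "pal_factors (rev w) = pal_factors w"
    by (auto simp: pal_factors_conv sublist_rev_right palindrome_def)
  then show ?thesis
    by (simp add: rich_def)
qed

definition fresh_pal_suffix :: "'a list \<Rightarrow> 'a \<Rightarrow> 'a list \<Rightarrow> bool" where
  "fresh_pal_suffix u x s \<longleftrightarrow> s \<noteq> [] \<and> palindrome s \<and> suffix s (u @ [x]) \<and> \<not> sublist s u"

lemma rich_snoc:
  assumes "rich u" "fresh_pal_suffix u x s"
  shows "rich (u @ [x])"
proof -
  have "s \<notin> pal_factors u"
    using assms(2) by (simp add: fresh_pal_suffix_def pal_factors_conv)
  moreover have "s \<in> pal_factors (u @ [x])"
    using assms(2) unfolding pal_factors_snoc fresh_pal_suffix_def by blast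
  ultimately have "pal_factors u \<subset> pal_factors (u @ [x])"
    unfolding pal_factors_snoc by blast
  then have "card (pal_factors u) < card (pal_factors (u @ [x]))"
    by (rule psubset_card_mono[OF finite_pal_factors])
  then show ?thesis
    using assms(1) card_pal_factors_le_length[of "u @ [x]"] by (simp add: rich_def)
qed

lemma rich_append_replicate:
  assumes "rich u" "\<And>t. t < k \<Longrightarrow> \<exists>s. fresh_pal_suffix (u @ replicate t c) c s"
  shows "rich (u @ replicate k c)"
  using assms(2)
proof (induction k)
  case 0
  then show ?case using assms(1) by simp
next
  case (Suc k)
  then have "rich (u @ replicate k c)"
    by simp
  moreover obtain s where "fresh_pal_suffix (u @ replicate k c) c s"
    using Suc.prems by blast
  ultimately have "rich ((u @ replicate k c) @ [c])"
    by (rule rich_snoc)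
  then show ?case
    by (simp add: replicate_append_same[symmetric])
qed

lemma fresh_pal_suffix_replicate:
  assumes "\<not> sublist (replicate (Suc t) c) (u @ replicate t c)"
  shows "fresh_pal_suffix (u @ replicate t c) c (replicate (Suc t) c)"
proof -
  have "(u @ replicate t c) @ [c] = u @ replicate (Suc t) c"
    by (simp add: replicate_append_same)
  then show ?thesis
    using assms by (simp add: fresh_pal_suffix_def palindrome_def suffix_appendI)
qed

lemma fresh_pal_suffix_mirror:
  assumes "palindrome D" "t < r"
    and "\<not> sublist (replicate (Suc t) c @ D @ replicate (Suc t) c) (R @ replicate r c @ D @ replicate t c)"
  shows "fresh_pal_suffix (R @ replicate r c @ D @ replicate t c) c
    (replicate (Suc t) c @ D @ replicate (Suc t) c)"
proof -
  have "replicate r c = replicate (r - Suc t) c @ replicate (Suc t) c"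
    using assms(2) replicate_add[of "r - Suc t" "Suc t" c] by simp
  then have "(R @ replicate r c @ D @ replicate t c) @ [c]
      = (R @ replicate (r - Suc t) c) @ replicate (Suc t) c @ D @ replicate (Suc t) c"
    by (simp add: replicate_append_same)
  then have "suffix (replicate (Suc t) c @ D @ replicate (Suc t) c) ((R @ replicate r c @ D @ replicate t c) @ [c])"
    by (simp only: suffix_appendI suffix_order.refl)
  moreover have "rev D = D"
    using assms(1) unfolding palindrome_def by (rule sym)
  then have "palindrome (replicate (Suc t) c @ D @ replicate (Suc t) c)"
    unfolding palindrome_def by (simp add: replicate_app_Cons_same)
  ultimately show ?thesis
    using assms(3) by (simp add: fresh_pal_suffix_def)
qed

section \<open>Run-length encodings\<close>

fun rl_word :: "('a \<times> nat) list \<Rightarrow> 'a list" where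
  "rl_word [] = []"
| "rl_word ((c, n) # rs) = replicate n c @ rl_word rs"

fun rl_normal :: "('a \<times> nat) list \<Rightarrow> bool" where
  "rl_normal [] \<longleftrightarrow> True"
| "rl_normal [(c, n)] \<longleftrightarrow> 0 < n"
| "rl_normal ((c, n) # (d, m) # rs) \<longleftrightarrow> 0 < n \<and> c \<noteq> d \<and> rl_normal ((d, m) # rs)"

fun rl_cons :: "'a \<Rightarrow> nat \<Rightarrow> ('a \<times> nat) list \<Rightarrow> ('a \<times> nat) list" where
  "rl_cons c n [] = (if n = 0 then [] else [(c, n)])"
| "rl_cons c n ((d, m) # rs) =
    (if n = 0 then (d, m) # rs else if c = d then (c, n + m) # rs else (c, n) # (d, m) # rs)"

fun rl_norm :: "('a \<times> nat) list \<Rightarrow> ('a \<times> nat) list" where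
  "rl_norm [] = []"
| "rl_norm ((c, n) # rs) = rl_cons c n (rl_norm rs)"

fun rl_prefix :: "('a \<times> nat) list \<Rightarrow> ('a \<times> nat) list \<Rightarrow> bool" where
  "rl_prefix [] U \<longleftrightarrow> True"
| "rl_prefix (s # S) [] \<longleftrightarrow> False"
| "rl_prefix [(c, l)] ((d, L) # U) \<longleftrightarrow> c = d \<and> l \<le> L"
| "rl_prefix ((c, l) # s # S) ((d, L) # U) \<longleftrightarrow> c = d \<and> l = L \<and> rl_prefix (s # S) U"

text \<open>A pattern of several runs must start with a final segment of a run of the text
  and continue with a prefix of the remaining runs.\<close>
fun rl_factor :: "('a \<times> nat) list \<Rightarrow> ('a \<times> nat) list \<Rightarrow> bool" where
  "rl_factor [] U \<longleftrightarrow> True"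
| "rl_factor (s # S) [] \<longleftrightarrow> False"
| "rl_factor ((c, l) # S) ((d, L) # U) \<longleftrightarrow>
    c = d \<and> l \<le> L \<and> rl_prefix S U \<or> rl_factor ((c, l) # S) U"

lemma rl_word_append [simp]: "rl_word (rs @ qs) = rl_word rs @ rl_word qs"
  by (induction rs) auto

lemma rl_normal_ConsD:
  assumes "rl_normal ((c, n) # rs)"
  shows "0 < n" "rl_normal rs" "rl_word rs = [] \<or> hd (rl_word rs) \<noteq> c"
proof -
  show "0 < n" "rl_normal rs"
    using assms by (cases rs; auto)+
  show "rl_word rs = [] \<or> hd (rl_word rs) \<noteq> c"
  proof (cases rs)
    case (Cons r rs')
    then obtain d m where "rs = (d, m) # rs'" "0 < m" "c \<noteq> d"
      using assms by (cases r; cases rs'; auto)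
    then show ?thesis
      by (cases m) auto
  qed simp
qed

lemma rl_normal_Cons_change_length:
  "rl_normal ((c, n) # rs) \<Longrightarrow> 0 < k \<Longrightarrow> rl_normal ((c, k) # rs)"
  by (cases rs) auto

lemma rl_word_eq_Nil_iff: "rl_normal S \<Longrightarrow> rl_word S = [] \<longleftrightarrow> S = []"
  by (cases S) (auto dest: rl_normal_ConsD(1))

lemma rl_word_rl_cons: "rl_word (rl_cons c n rs) = replicate n c @ rl_word rs"
  by (cases "(c, n, rs)" rule: rl_cons.cases) (auto simp: replicate_add)

lemma rl_normal_rl_cons: "rl_normal rs \<Longrightarrow> rl_normal (rl_cons c n rs)"
  by (cases "(c, n, rs)" rule: rl_cons.cases)
    (auto dest: rl_normal_ConsD(2) rl_normal_Cons_change_length)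

lemma rl_word_rl_norm [simp]: "rl_word (rl_norm rs) = rl_word rs"
  by (induction rs) (auto simp: rl_word_rl_cons)

lemma rl_normal_rl_norm: "rl_normal (rl_norm rs)"
  by (induction rs) (auto intro: rl_normal_rl_cons)

lemma prefix_replicate_append_iff:
  assumes "0 < l" "0 < L" "X = [] \<or> hd X \<noteq> c" "Y = [] \<or> hd Y \<noteq> d"
  shows "prefix (replicate l c @ X) (replicate L d @ Y) \<longleftrightarrow>
    c = d \<and> (if X = [] then l \<le> L else l = L \<and> prefix X Y)"
proof (cases "c = d")
  case False
  then show ?thesis
    using assms(1,2) by (cases l; cases L) auto
next
  case True
  consider "l < L" | "l = L" | "L < l"
    by linarith
  then show ?thesis
  proof cases
    case 1
    then have "replicate L d = replicate l c @ replicate (L - l) c"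
      using True by (simp flip: replicate_add)
    then show ?thesis
      using 1 assms(3) True by (cases X; cases "L - l") auto
  next
    case 3
    then have "replicate l c = replicate L d @ replicate (l - L) d"
      using True by (simp flip: replicate_add)
    then show ?thesis
      using 3 assms(4) True by (cases Y; cases "l - L") auto
  qed (use True in simp)
qed

lemma prefix_rl_word_iff:
  "rl_normal S \<Longrightarrow> rl_normal U \<Longrightarrow> prefix (rl_word S) (rl_word U) \<longleftrightarrow> rl_prefix S U"
proof (induction S U rule: rl_prefix.induct)
  case (2 s S)
  then obtain c n where "s = (c, n)" "0 < n"
    by (cases s) (auto dest: rl_normal_ConsD)
  then show ?case by simp
next
  case (3 c l d L U)
  then show ?case
    using prefix_replicate_append_iff[of l L "[]" c "rl_word U" d] by (auto dest: rl_normal_ConsD)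
next
  case (4 c l s S d L U)
  have "rl_word (s # S) \<noteq> []"
    using "4.prems"(1) by (cases s) (auto dest!: rl_normal_ConsD(2) rl_normal_ConsD(1))
  then show ?case
    using "4" prefix_replicate_append_iff[of l L "rl_word (s # S)" c "rl_word U" d]
    by (auto dest: rl_normal_ConsD)
qed simp

lemma sublist_replicate_append_iff:
  "sublist s (replicate L d @ W) \<longleftrightarrow>
    sublist s W \<or> (\<exists>k. 0 < k \<and> k \<le> L \<and> prefix s (replicate k d @ W))"
proof (induction L)
  case (Suc L)
  have "sublist s (replicate (Suc L) d @ W) \<longleftrightarrow>
      prefix s (replicate (Suc L) d @ W) \<or> sublist s (replicate L d @ W)"
    by (simp add: sublist_Cons_right)
  then show ?case
    using Suc.IH le_Suc_eq by auto
qed simp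

lemma sublist_rl_word_iff_rl_factor:
  "rl_normal S \<Longrightarrow> rl_normal U \<Longrightarrow> sublist (rl_word S) (rl_word U) \<longleftrightarrow> rl_factor S U"
proof (induction S U rule: rl_factor.induct)
  case (2 s S)
  then obtain c n where "s = (c, n)" "0 < n"
    by (cases s) (auto dest: rl_normal_ConsD)
  then show ?case by simp
next
  case (3 c l S d L U)
  have l: "0 < l" "rl_normal S" "rl_word S = [] \<or> hd (rl_word S) \<noteq> c"
    and L: "0 < L" "rl_normal U" "rl_word U = [] \<or> hd (rl_word U) \<noteq> d"
    using "3.prems" by (auto dest: rl_normal_ConsD)
  have pre: "prefix (replicate l c @ rl_word S) (replicate k d @ rl_word U) \<longleftrightarrow>
      c = d \<and> (if S = [] then l \<le> k else l = k \<and> rl_prefix S U)" if "0 < k" for k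
    using prefix_replicate_append_iff[OF l(1) that l(3) L(3)]
    by (simp add: prefix_rl_word_iff l(2) L(2) rl_word_eq_Nil_iff)
  have start: "(\<exists>k. 0 < k \<and> k \<le> L \<and> prefix (replicate l c @ rl_word S) (replicate k d @ rl_word U))
      \<longleftrightarrow> c = d \<and> l \<le> L \<and> rl_prefix S U"
  proof
    assume "\<exists>k. 0 < k \<and> k \<le> L \<and> prefix (replicate l c @ rl_word S) (replicate k d @ rl_word U)"
    then obtain k where "0 < k" "k \<le> L" "prefix (replicate l c @ rl_word S) (replicate k d @ rl_word U)"
      by blast
    then show "c = d \<and> l \<le> L \<and> rl_prefix S U"
      using pre[of k] by (cases S) (auto split: if_splits)
  next
    assume "c = d \<and> l \<le> L \<and> rl_prefix S U"
    moreover have "prefix (replicate l c @ rl_word S) (replicate l d @ rl_word U)"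
      using calculation pre[OF l(1)] by simp
    ultimately show "\<exists>k. 0 < k \<and> k \<le> L \<and> prefix (replicate l c @ rl_word S) (replicate k d @ rl_word U)"
      using l(1) by blast
  qed
  have "sublist (rl_word ((c, l) # S)) (rl_word ((d, L) # U)) \<longleftrightarrow>
      sublist (rl_word ((c, l) # S)) (rl_word U) \<or>
      (\<exists>k. 0 < k \<and> k \<le> L \<and> prefix (replicate l c @ rl_word S) (replicate k d @ rl_word U))"
    by (simp only: rl_word.simps sublist_replicate_append_iff)
  also have "\<dots> \<longleftrightarrow> rl_factor ((c, l) # S) U \<or> c = d \<and> l \<le> L \<and> rl_prefix S U"
    using "3.IH" "3.prems"(1) L(2) start by simp
  finally show ?case
    by auto
qed simp

lemma sublist_rl_word_iff: "sublist (rl_word S) (rl_word U) \<longleftrightarrow> rl_factor (rl_norm S) (rl_norm U)"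
  using sublist_rl_word_iff_rl_factor[OF rl_normal_rl_norm rl_normal_rl_norm] by simp

section \<open>Rich words with few runs\<close>

lemma rich_Nil: "rich []"
  by (simp add: rich_def pal_factors_conv)

text \<open>After the \<open>(t+1)\<close>-st letter of the new run, the fresh palindromic suffix is the mirror
  \<open>c\<^bsup>t+1\<^esup> D c\<^bsup>t+1\<^esup>\<close> for \<open>t < r\<close> and the run \<open>c\<^bsup>t+1\<^esup>\<close> itself for \<open>t \<ge> r\<close>.\<close>
lemma rich_extend_run:
  fixes Rs Ds :: "('a \<times> nat) list"
  assumes "rich (rl_word (Rs @ (c, r) # Ds @ [(c, j)]))" "palindrome (rl_word Ds)"
    and run: "\<And>t. j \<le> t \<Longrightarrow> r \<le> t \<Longrightarrow> t < k \<Longrightarrow>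
      \<not> rl_factor (rl_norm [(c, Suc t)]) (rl_norm (Rs @ (c, r) # Ds @ [(c, t)]))"
    and mirror: "\<And>t. j \<le> t \<Longrightarrow> t < r \<Longrightarrow> t < k \<Longrightarrow>
      \<not> rl_factor (rl_norm ((c, Suc t) # Ds @ [(c, Suc t)])) (rl_norm (Rs @ (c, r) # Ds @ [(c, t)]))"
    and "j \<le> k" "w = rl_word (Rs @ (c, r) # Ds @ [(c, k)])"
  shows "rich w"
proof -
  let ?u = "rl_word Rs @ replicate r c @ rl_word Ds"
  have word: "rl_word (Rs @ (c, r) # Ds @ [(c, t)]) = ?u @ replicate t c" for t
    by simp
  have "rich ((?u @ replicate j c) @ replicate (k - j) c)"
  proof (rule rich_append_replicate)
    show "rich (?u @ replicate j c)"
      using assms(1) by (simp only: word)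
  next
    fix i assume "i < k - j"
    define t where "t = j + i"
    have t: "j \<le> t" "t < k"
      using \<open>i < k - j\<close> by (simp_all add: t_def)
    have "fresh_pal_suffix (?u @ replicate t c) c s \<Longrightarrow>
        fresh_pal_suffix ((?u @ replicate j c) @ replicate i c) c s" for s
      by (simp add: t_def replicate_add)
    moreover have "\<exists>s. fresh_pal_suffix (?u @ replicate t c) c s"
    proof (cases "r \<le> t")
      case True
      then have "\<not> sublist (rl_word [(c, Suc t)]) (rl_word (Rs @ (c, r) # Ds @ [(c, t)]))"
        using run t by (simp only: sublist_rl_word_iff not_False_eq_True)
      then show ?thesis
        using fresh_pal_suffix_replicate[of t c ?u] by (auto simp only: word rl_word.simps append_Nil2)
    next
      case False
      then have "\<not> sublist (rl_word ((c, Suc t) # Ds @ [(c, Suc t)])) (rl_word (Rs @ (c, r) # Ds @ [(c, t)]))"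
        using mirror t by (simp only: sublist_rl_word_iff not_le not_False_eq_True)
      then show ?thesis
        using False fresh_pal_suffix_mirror[OF assms(2), of t r c "rl_word Rs"] by auto
    qed
    ultimately show "\<exists>s. fresh_pal_suffix ((?u @ replicate j c) @ replicate i c) c s"
      by blast
  qed
  then show ?thesis
    using assms(5,6) by (simp flip: replicate_add)
qed

lemma rich_two_runs:
  assumes "c \<noteq> d"
  shows "rich (rl_word [(c, y), (d, x)])"
proof -
  have c: "rich (rl_word [(c, y)])"
    by (rule rich_extend_run[of "[]" c 0 "[]" 0 y]) (auto simp: rich_Nil palindrome_def)
  show ?thesis
    by (rule rich_extend_run[of "[(c, y)]" d 0 "[]" 0 x]) (use assms c in \<open>auto simp: palindrome_def\<close>)
qed

lemma rich_four_runs: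
  assumes "c \<noteq> d"
  shows "rich (rl_word [(c, y), (d, x), (c, u), (d, s)])"
proof -
  consider "x = 0" | "u = 0" | "0 < x" "0 < u"
    by blast
  then show ?thesis
  proof cases
    case 1
    then show ?thesis
      using rich_two_runs[OF assms, of "y + u" s] by (simp add: replicate_add)
  next
    case 2
    then show ?thesis
      using rich_two_runs[OF assms, of y "x + s"] by (simp add: replicate_add)
  next
    case 3
    have cdc: "rich (rl_word [(c, y), (d, x), (c, u)])"
      by (rule rich_extend_run[of "[]" c y "[(d, x)]" 0 u])
        (use assms 3 rich_two_runs[OF assms, of y x] in \<open>auto simp: palindrome_def\<close>)
    show ?thesis
      by (rule rich_extend_run[of "[(c, y)]" d x "[(c, u)]" 0 s])
        (use assms 3 cdc in \<open>auto simp: palindrome_def\<close>)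
  qed
qed

lemma rich_six_runs:
  assumes "c \<noteq> d" "0 < z" "2 \<le> x" "0 < u" "min y u \<le> z"
  shows "rich (rl_word [(c, y), (d, 1), (c, z), (d, x), (c, u), (d, s)])"
proof -
  have cdc: "rich (rl_word [(c, y), (d, 1), (c, z)])"
    using rich_four_runs[OF assms(1), of y 1 z 0] by simp
  have cdcd: "rich (rl_word [(c, y), (d, 1), (c, z), (d, x)])"
    by (rule rich_extend_run[of "[(c, y)]" d 1 "[(c, z)]" 0 x])
      (use assms cdc in \<open>auto simp: palindrome_def\<close>)
  have cdcdc: "rich (rl_word [(c, y), (d, 1), (c, z), (d, x), (c, u)])"
    by (rule rich_extend_run[of "[(c, y), (d, 1)]" c z "[(d, x)]" 0 u])
      (use assms cdcd in \<open>auto simp: palindrome_def\<close>)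
  show ?thesis
  proof (cases "z = u")
    case True
    \<comment> \<open>Then \<open>d c\<^sup>u d\<close> already occurs; the first \<open>d\<close> ends the new palindrome
      \<open>d c\<^sup>z d\<^sup>x c\<^sup>u d\<close> instead.\<close>
    have cdcdcd: "rich (rl_word [(c, y), (d, 1), (c, z), (d, x), (c, u), (d, 1)])"
      by (rule rich_extend_run[of "[(c, y)]" d 1 "[(c, z), (d, x), (c, u)]" 0 1])
        (use assms True cdcdc in \<open>auto simp: palindrome_def\<close>)
    show ?thesis
    proof (cases "s = 0")
      case False
      show ?thesis
        by (rule rich_extend_run[of "[(c, y), (d, 1), (c, z)]" d x "[(c, u)]" 1 s])
          (use assms True False cdcdcd in \<open>auto simp: palindrome_def\<close>)
    qed (use cdcdc in simp)
  next
    case False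
    show ?thesis
      by (rule rich_extend_run[of "[(c, y), (d, 1), (c, z)]" d x "[(c, u)]" 0 s])
        (use assms False cdcdc in \<open>auto simp: palindrome_def\<close>)
  qed
qed

lemma rich_six_runs_singletons:
  assumes "c \<noteq> d" "0 < z" "0 < u"
  shows "rich (rl_word [(c, y), (d, 1), (c, z), (d, 1), (c, u), (d, s)])"
proof -
  have cdcd: "rich (rl_word [(c, y), (d, 1), (c, z), (d, 1)])"
    by (rule rich_extend_run[of "[(c, y)]" d 1 "[(c, z)]" 0 1])
      (use assms rich_four_runs[OF assms(1), of y 1 z 0] in \<open>auto simp: palindrome_def\<close>)
  \<comment> \<open>While \<open>t < y\<close>, the short mirror \<open>c\<^bsup>t+1\<^esup> d c\<^bsup>t+1\<^esup>\<close> may occur inside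
    \<open>c\<^sup>y d c\<^sup>z\<close>, so the longer \<open>c\<^bsup>t+1\<^esup> d c\<^sup>z d c\<^bsup>t+1\<^esup>\<close> is used.\<close>
  have cdcdc_short: "rich (rl_word [(c, y), (d, 1), (c, z), (d, 1), (c, min u y)])"
    by (rule rich_extend_run[of "[]" c y "[(d, 1), (c, z), (d, 1)]" 0 "min u y"])
      (use assms cdcd in \<open>auto simp: palindrome_def\<close>)
  have cdcdc: "rich (rl_word [(c, y), (d, 1), (c, z), (d, 1), (c, u)])"
    by (rule rich_extend_run[of "[(c, y), (d, 1)]" c z "[(d, 1)]" "min u y" u])
      (use assms cdcdc_short in \<open>auto simp: palindrome_def min_def split: if_splits\<close>)
  show ?thesis
  proof (cases "z = u")
    case True
    show ?thesis
      by (rule rich_extend_run[of "[(c, y)]" d 1 "[(c, z), (d, 1), (c, u)]" 0 s])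
        (use assms True cdcdc in \<open>auto simp: palindrome_def\<close>)
  next
    case False
    show ?thesis
      by (rule rich_extend_run[of "[(c, y), (d, 1), (c, z)]" d 1 "[(c, u)]" 0 s])
        (use assms False cdcdc in \<open>auto simp: palindrome_def\<close>)
  qed
qed

lemma rich_six_runs_bounded:
  assumes "c \<noteq> d" "x2 \<le> 1" "x1 + x3 + x5 \<le> 4"
  shows "rich (rl_word [(c, x1), (d, x2), (c, x3), (d, x4), (c, x5), (d, x6)])"
proof -
  consider "x2 = 0" | "x3 = 0" | "x4 = 0" | "x5 = 0" | "x2 = 1" "0 < x3" "x4 = 1" "0 < x5"
    | "x2 = 1" "0 < x3" "2 \<le> x4" "0 < x5"
    using assms(2) by linarith
  then show ?thesis
  proof cases
    case 1
    then show ?thesis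
      using rich_four_runs[OF assms(1), of "x1 + x3" x4 x5 x6] by (simp add: replicate_add)
  next
    case 2
    then show ?thesis
      using rich_four_runs[OF assms(1), of x1 "x2 + x4" x5 x6] by (simp add: replicate_add)
  next
    case 3
    then show ?thesis
      using rich_four_runs[OF assms(1), of x1 x2 "x3 + x5" x6] by (simp add: replicate_add)
  next
    case 4
    then show ?thesis
      using rich_four_runs[OF assms(1), of x1 x2 x3 "x4 + x6"] by (simp add: replicate_add)
  next
    case 5
    then show ?thesis
      using rich_six_runs_singletons[OF assms(1), of x3 x5 x1 x6] by simp
  next
    case 6
    \<comment> \<open>The only place where \<open>x1 + x3 + x5 \<le> 4\<close> is needed.\<close>
    moreover have "min x1 x5 \<le> x3"
      using assms(3) 6 by (simp add: min_def)
    ultimately show ?thesis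
      using rich_six_runs[OF assms(1), of x3 x4 x5 x1 x6] by simp
  qed
qed

section \<open>Block reversals\<close>

inductive block_reversal :: "'a list \<Rightarrow> 'a list \<Rightarrow> bool" where
  Nil: "block_reversal [] []"
| append: "B \<noteq> [] \<Longrightarrow> block_reversal w v \<Longrightarrow> block_reversal (w @ B) (B @ v)"

lemma block_reversal_if_BR:
  assumes "v \<in> BR w"
  shows "block_reversal w v"
proof -
  obtain Bs where Bs: "v = concat (rev Bs)" "w = concat Bs" "\<forall>B\<in>set Bs. B \<noteq> []"
    using assms by (auto simp: BR_def)
  have "block_reversal (concat Bs) (concat (rev Bs))"
    using Bs(3) by (induction Bs rule: rev_induct) (auto intro: block_reversal.intros)
  then show ?thesis
    using Bs by simp
qed

lemma rev_in_BR:
  assumes "v \<in> BR w"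
  shows "rev v \<in> BR (rev w)"
proof -
  obtain Bs where Bs: "v = concat (rev Bs)" "Bs \<noteq> []" "\<forall>B\<in>set Bs. B \<noteq> []" "concat Bs = w"
    using assms by (auto simp: BR_def)
  let ?Cs = "rev (map rev Bs)"
  have "rev v = concat (rev ?Cs)" "concat ?Cs = rev w"
    using Bs(1,4) by (auto simp: rev_concat rev_map)
  moreover have "?Cs \<noteq> []" "\<forall>C\<in>set ?Cs. C \<noteq> []"
    using Bs(2,3) by auto
  ultimately show ?thesis
    unfolding BR_def by blast
qed

lemma block_reversal_length_set:
  "block_reversal w v \<Longrightarrow> length v = length w \<and> set v = set w"
  by (induction rule: block_reversal.induct) auto

lemma block_reversal_replicate:
  assumes "block_reversal (replicate n c) v"
  shows "v = replicate n c"
  using block_reversal_length_set[OF assms] by (auto intro: replicate_eqI)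

lemma replicate_eq_append_iff:
  "replicate n x = xs @ ys \<longleftrightarrow> (\<exists>i j. i + j = n \<and> xs = replicate i x \<and> ys = replicate j x)"
proof
  assume h: "replicate n x = xs @ ys"
  have "length xs + length ys = n"
    using arg_cong[OF h, of length] by simp
  moreover have "xs = replicate (length xs) x" "ys = replicate (length ys) x"
    using arg_cong[OF h, of set] by (auto intro!: replicate_eqI split: if_splits)
  ultimately show "\<exists>i j. i + j = n \<and> xs = replicate i x \<and> ys = replicate j x"
    by blast
qed (auto simp: replicate_add)

lemma replicate_append_replicate_eq_append:
  assumes "replicate n a @ replicate k b = w @ B"
  shows "(\<exists>j\<le>k. B = replicate j b \<and> w = replicate n a @ replicate (k - j) b)
    \<or> (\<exists>l\<le>n. B = replicate l a @ replicate k b \<and> w = replicate (n - l) a)"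
  using assms unfolding append_eq_append_conv2
proof (elim exE disjE conjE)
  fix us assume "replicate n a = w @ us" "us @ replicate k b = B"
  then obtain i l where "i + l = n" "w = replicate i a" "B = replicate l a @ replicate k b"
    unfolding replicate_eq_append_iff by blast
  then show ?thesis
    by (intro disjI2 exI[of _ l]) simp
next
  fix us assume "replicate n a @ us = w" "replicate k b = us @ B"
  then obtain i j where "i + j = k" "w = replicate n a @ replicate i b" "B = replicate j b"
    unfolding replicate_eq_append_iff by blast
  then show ?thesis
    by (intro disjI1 exI[of _ j]) simp
qed

lemma block_reversal_replicate_append_replicate:
  assumes "block_reversal (replicate n a @ replicate k b) v"
  shows "\<exists>y1 y2 y3 y4. v = replicate y1 b @ replicate y2 a @ replicate y3 b @ replicate y4 a
    \<and> y1 + y3 = k"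
  using assms
proof (induction "replicate n a @ replicate k b" v arbitrary: n k rule: block_reversal.induct)
  case Nil
  then show ?case
    by (intro exI[of _ 0]) simp
next
  case (append B w v)
  from replicate_append_replicate_eq_append[OF append.hyps(4)[symmetric]] show ?case
  proof (elim disjE exE conjE)
    fix j assume j: "j \<le> k" "B = replicate j b" "w = replicate n a @ replicate (k - j) b"
    obtain y1 y2 y3 y4 where
      "v = replicate y1 b @ replicate y2 a @ replicate y3 b @ replicate y4 a" "y1 + y3 = k - j"
      using append.hyps(3)[OF j(3)] by blast
    with j show ?case
      by (intro exI[of _ "j + y1"] exI[of _ y2] exI[of _ y3] exI[of _ y4])
        (simp add: replicate_add)
  next
    fix l assume l: "B = replicate l a @ replicate k b" "w = replicate (n - l) a"
    have "v = replicate (n - l) a"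
      using append.hyps(2) unfolding l(2) by (rule block_reversal_replicate)
    with l show ?case
      by (intro exI[of _ 0] exI[of _ l] exI[of _ k] exI[of _ "n - l"]) simp
  qed
qed

lemma block_reversal_aba:
  assumes "block_reversal (replicate n a @ replicate m b @ [a]) v"
  shows "\<exists>x1 x2 x3 x4 x5 x6. x2 \<le> 1 \<and> x1 + x3 + x5 = m \<and>
    v = replicate x1 b @ replicate x2 a @ replicate x3 b @ replicate x4 a @ replicate x5 b @ replicate x6 a"
  using assms
proof cases
  case (append B w v')
  then obtain B' where B': "B = B' @ [a]" "replicate n a @ replicate m b = w @ B'"
    by (cases B rule: rev_cases) auto
  from replicate_append_replicate_eq_append[OF B'(2)] show ?thesis
  proof (elim disjE exE conjE)
    fix j assume j: "j \<le> m" "B' = replicate j b" "w = replicate n a @ replicate (m - j) b"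
    obtain y1 y2 y3 y4 where
      "v' = replicate y1 b @ replicate y2 a @ replicate y3 b @ replicate y4 a" "y1 + y3 = m - j"
      using block_reversal_replicate_append_replicate[OF append(4)[unfolded j(3)]] by blast
    with j append(2) B'(1) show ?thesis
      by (intro exI[of _ j] exI[of _ 1] exI[of _ y1] exI[of _ y2] exI[of _ y3] exI[of _ y4]) simp
  next
    fix l assume l: "B' = replicate l a @ replicate m b" "w = replicate (n - l) a"
    have "v' = replicate (n - l) a"
      using append(4) unfolding l(2) by (rule block_reversal_replicate)
    with l append(2) B'(1) show ?thesis
      by (intro exI[of _ 0] exI[of _ 0] exI[of _ 0] exI[of _ l] exI[of _ m] exI[of _ "Suc (n - l)"])
        (simp add: replicate_append_same)
  qed
qed simp

lemma rich_if_in_BR_aba: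
  assumes "a \<noteq> b" "m \<le> 4" "v \<in> BR (replicate n a @ replicate m b @ [a])"
  shows "rich v"
proof -
  obtain x1 x2 x3 x4 x5 x6 where "x2 \<le> 1" "x1 + x3 + x5 = m"
    "v = replicate x1 b @ replicate x2 a @ replicate x3 b @ replicate x4 a @ replicate x5 b @ replicate x6 a"
    using block_reversal_aba[OF block_reversal_if_BR[OF assms(3)]] by blast
  then show ?thesis
    using rich_six_runs_bounded[of b a x2 x1 x3 x5 x4 x6] assms(1,2) by simp
qed

theorem mainTheorem13:
  fixes a b :: 'a and n1 n2 :: nat and w v :: "'a list"
  assumes "a \<noteq> b"
    and "n1 \<ge> 1"
    and "n2 \<in> {3, 4}"
    and "w = replicate n1 a @ replicate n2 b @ [a] \<or> w = [a] @ replicate n2 b @ replicate n1 a"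
    and "v \<in> BR w"
  shows "rich v"
proof -
  have n2: "n2 \<le> 4"
    using assms(3) by auto
  from assms(4) show ?thesis
  proof
    assume "w = replicate n1 a @ replicate n2 b @ [a]"
    then show ?thesis
      using rich_if_in_BR_aba[OF assms(1) n2] assms(5) by simp
  next
    assume "w = [a] @ replicate n2 b @ replicate n1 a"
    then have "rev v \<in> BR (replicate n1 a @ replicate n2 b @ [a])"
      using rev_in_BR[OF assms(5)] by simp
    then show ?thesis
      using rich_if_in_BR_aba[OF assms(1) n2] rich_rev_iff by blast
  qed
qed

end
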